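(* In the setting described in the context, for every $n\ge1$ and every $y\in\mathbb R^p$, $$\tau_n\widetilde J(x_n,w_n,y)\le\langle x_{n+1}-z_{n+1},x^\star-x_{n+1}\rangle+\frac1\beta\langle y_n-y_{n-1},y-y_n\rangle+\psi\delta_n\langle x_n-z_{n+1},x_{n+1}-x_n\rangle+\tau_n\langle\theta_n,x_n-x_{n+1}\rangle,$$ where $\widetilde J(x,w,y)=F(x,w)+\langle y,H(x)-w\rangle-F(x^\star,w^\star)$.
   Context: Let $f:\mathbb{R}^p\to(-\infty,+\infty]$ and $g:\mathbb{R}^q\to(-\infty,+\infty]$ be proper closed convex functions; $f^*$ is the Fenchel conjugate, $\mathrm{dom}$ the effective domain, $\mathrm{Prox}_{\lambda h}(x)=\arg\min_u\{h(u)+\frac{1}{2\lambda}\|u-x\|^2\}$. Let $h:\mathbb R^q\to\mathbb R$ be convex with $L_h$-Lipschitz gradient, and $H:\mathrm{dom}(g)\to\mathrm{dom}(f)$ continuously differentiable with Jacobian $H'$, such that $x\mapsto\langle H(x),y\rangle$ is convex for every $y\in\mathrm{dom}(f^* )$. Set $\Phi(x,y)=h(x)+\langle H(x),y\rangle$ and $\mathcal L(x,y)=g(x)+\Phi(x,y)-f^*(y)$. Assume: (A1) the set of saddle points $\{(x^\star,y^\star)\in\mathrm{dom}(g)\times\mathrm{dom}(f^* ):-\nabla_x\Phi(x^\star,y^\star)\in\partial g(x^\star),\ \nabla_y\Phi(x^\star,y^\star)\in\partial f^*(y^\star)\}$ is nonempty, $\mathrm{dom}(g)\times\mathrm{dom}(f^*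 )\subseteq\mathrm{dom}(\Phi)$, $\mathcal L(x^\star,y^\star)$ finite; (A2) $\Phi(\cdot,y)$ convex differentiable, $\Phi(x,\cdot)$ concave differentiable, and on every pair of bounded sets $\mathcal X,\mathcal Y$ there are $L_{yy},L_{xx}\ge0,L_{xy}>0$ with $\|\nabla_y\Phi(x,y)-\nabla_y\Phi(x,\tilde y)\|\le L_{yy}\|y-\tilde y\|$, $\|\nabla_x\Phi(x,y)-\nabla_x\Phi(\tilde x,\tilde y)\|\le L_{xx}\|x-\tilde x\|+L_{xy}\|y-\tilde y\|$ on $(\mathcal X\cap\mathrm{dom}(g))\times(\mathcal Y\cap\mathrm{dom}(f^* ))$. Let $F(x,w)=g(x)+h(x)+f(w)$, and let $(x^\star,w^\star,y^\star)$ be a fixed point of $\widetilde\Omega=\{(x,w,y)\in\mathrm{dom}(g)\times\mathrm{dom}(f)\times\mathrm{dom}(f^* ): -H'(x)^\top y-\nabla h(x)\in\partial g(x),\ y\in\partial f(w),\ H(x)=w\}$. Algorithm PDAc-L (applied to this $\Phi$): choose $\psi\in(1,1+\sqrt3)$, $\xi>0$, $\varphi>1$ with $\omega:=2\psi-\xi-\frac{\psi^3\varphi}{1+\psi}>0$, $\tau_{\max}>0$, $\nu,\mu\in(0,1)$, $\eta\in[0,1)$, integer $M\ge1$, $\beta>0$, $x_0\in\mathrm{dom}(g)$, $y_0\in\mathrm{dom}(f^* )$, $\tau_0\in(0,\tau_{\max}]$; $z_0=x_0$, $\delta_0=1$. For $n\ge1$: $z_n=\frac{\psi-1}{\psi}x_{n-1}+\frac1\psi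 z_{n-1}$, $x_n=\mathrm{Prox}_{\tau_{n-1}g}(z_n-\tau_{n-1}\nabla_x\Phi(x_{n-1},y_{n-1}))$; with $\tau=\min\{\varphi\tau_{n-1},\tau_{\max}\}$, set $\tau_n=\tau\mu^i$, $y_n=\mathrm{Prox}_{\beta\tau_nf^*}(y_{n-1}+\beta\tau_nH(x_n))$, where $i\ge0$ is the smallest integer with $\frac{\tau_n\tau_{n-1}}{\xi}\|\theta_n\|^2+2\tau_n\Phi_n^y\le\nu r_n+(1-\nu)c_n$, $\theta_n=\nabla_x\Phi(x_n,y_n)-\nabla_x\Phi(x_{n-1},y_{n-1})$, $\Phi_n^y=\Phi(x_n,y_{n-1})+\langle\nabla_y\Phi(x_n,y_{n-1}),y_n-y_{n-1}\rangle-\Phi(x_n,y_n)$ (here $=0$), $r_n=\omega\delta_{n-1}\|x_n-x_{n-1}\|^2+\frac1\beta\|y_n-y_{n-1}\|^2$, $c_n=\frac{\eta}{|\mathcal I_n|}\sum_{i\in\mathcal I_n}r_i$, $\mathcal I_n=\{n-1,\dots,\max\{n-M,1\}\}$ ($c_1:=0$); $\delta_n=\tau_n/\tau_{n-1}$. Define $w_n=\mathrm{Prox}_{f/(\beta\tau_n)}(y_{n-1}/(\beta\tau_n)+H(x_n))$, so that $y_n=y_{n-1}+\beta\tau_n(H(x_n)-w_n)$. *)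

theory Defs
  imports "HOL-Analysis.Analysis"
begin

definition edom :: "('a \<Rightarrow> ereal) \<Rightarrow> 'a set" where
  "edom f = {x. f x < \<infinity>}"

definition epigraph :: "('a \<Rightarrow> ereal) \<Rightarrow> ('a \<times> real) set" where
  "epigraph f = {(x, t). f x \<le> ereal t}"

definition proper_fun :: "('a \<Rightarrow> ereal) \<Rightarrow> bool" where
  "proper_fun f \<longleftrightarrow> (\<forall>x. f x \<noteq> -\<infinity>) \<and> (\<exists>x. f x < \<infinity>)"

definition closed_convex_proper ::
  "('a::real_normed_vector \<Rightarrow> ereal) \<Rightarrow> bool" where
  "closed_convex_proper f \<longleftrightarrow>
     proper_fun f \<and> convex (epigraph f) \<and> closed (epigraph f)"

definition fconj :: "('a::real_inner \<Rightarrow> ereal) \<Rightarrow> 'a \<Rightarrow> ereal" where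
  "fconj f y = (SUP w. ereal (inner w y) - f w)"

definition subdiff :: "('a::real_inner \<Rightarrow> ereal) \<Rightarrow> 'a \<Rightarrow> 'a set" where
  "subdiff f x = {v. f x < \<infinity> \<and> (\<forall>u. f x + ereal (inner v (u - x)) \<le> f u)}"

definition Prox :: "real \<Rightarrow> ('a::real_normed_vector \<Rightarrow> ereal) \<Rightarrow> 'a \<Rightarrow> 'a" where
  "Prox lam h x = (SOME u. \<forall>v. h u + ereal (norm (u - x)^2 / (2 * lam))
                              \<le> h v + ereal (norm (v - x)^2 / (2 * lam)))"

text \<open>Transposed Jacobian: jacT D y is the vector H'(x)^T y, where D = H'(x) is linear.\<close>
definition jacT :: "('a::euclidean_space \<Rightarrow> 'b::real_inner) \<Rightarrow> 'b \<Rightarrow> 'a" where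
  "jacT D y = (\<Sum>i\<in>Basis. inner y (D i) *\<^sub>R i)"

definition Phi :: "('a \<Rightarrow> real) \<Rightarrow> ('a \<Rightarrow> 'b::real_inner) \<Rightarrow> 'a \<Rightarrow> 'b \<Rightarrow> real" where
  "Phi h H x y = h x + inner (H x) y"

definition gradxPhi ::
  "('a \<Rightarrow> 'a::euclidean_space) \<Rightarrow> ('a \<Rightarrow> 'a \<Rightarrow> 'b::real_inner) \<Rightarrow> 'a \<Rightarrow> 'b \<Rightarrow> 'a" where
  "gradxPhi gradh H' x y = gradh x + jacT (H' x) y"

definition gradyPhi :: "('a \<Rightarrow> 'b) \<Rightarrow> 'a \<Rightarrow> 'b \<Rightarrow> 'b" where
  "gradyPhi H x y = H x"

definition ytrial :: "('b::real_inner \<Rightarrow> ereal) \<Rightarrow> ('a \<Rightarrow> 'b) \<Rightarrow> real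
    \<Rightarrow> (nat \<Rightarrow> 'a) \<Rightarrow> (nat \<Rightarrow> 'b) \<Rightarrow> nat \<Rightarrow> real \<Rightarrow> 'b" where
  "ytrial f H \<beta> x y n t = Prox (\<beta> * t) (fconj f) (y (n - 1) + (\<beta> * t) *\<^sub>R H (x n))"

definition rval :: "real \<Rightarrow> real \<Rightarrow> real \<Rightarrow> 'a::real_normed_vector \<Rightarrow> 'a
    \<Rightarrow> 'b::real_normed_vector \<Rightarrow> 'b \<Rightarrow> real" where
  "rval \<omega> \<beta> dprev xn xprev yn yprev =
     \<omega> * dprev * norm (xn - xprev)^2 + (1 / \<beta>) * norm (yn - yprev)^2"

definition Iset :: "nat \<Rightarrow> nat \<Rightarrow> nat set" where
  "Iset M n = {max (n - M) 1 .. n - 1}"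

definition ls_cond :: "('b::euclidean_space \<Rightarrow> ereal) \<Rightarrow> ('a::euclidean_space \<Rightarrow> real)
    \<Rightarrow> ('a \<Rightarrow> 'a) \<Rightarrow> ('a \<Rightarrow> 'b) \<Rightarrow> ('a \<Rightarrow> 'a \<Rightarrow> 'b)
    \<Rightarrow> real \<Rightarrow> real \<Rightarrow> real \<Rightarrow> real \<Rightarrow> real \<Rightarrow> nat
    \<Rightarrow> (nat \<Rightarrow> 'a) \<Rightarrow> (nat \<Rightarrow> 'b) \<Rightarrow> (nat \<Rightarrow> real) \<Rightarrow> (nat \<Rightarrow> real)
    \<Rightarrow> nat \<Rightarrow> real \<Rightarrow> bool" where
  "ls_cond f h gradh H H' \<omega> \<xi> \<nu> \<eta> \<beta> M x y \<tau> \<delta> n t \<longleftrightarrow>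
     (let yt = ytrial f H \<beta> x y n t;
          \<theta> = gradxPhi gradh H' (x n) yt - gradxPhi gradh H' (x (n - 1)) (y (n - 1));
          Phiy = Phi h H (x n) (y (n - 1)) + inner (gradyPhi H (x n) (y (n - 1))) (yt - y (n - 1))
                 - Phi h H (x n) yt;
          r = rval \<omega> \<beta> (\<delta> (n - 1)) (x n) (x (n - 1)) yt (y (n - 1));
          c = (if n = 1 then 0
               else \<eta> / real (card (Iset M n)) *
                    (\<Sum>i\<in>Iset M n. rval \<omega> \<beta> (\<delta> (i - 1)) (x i) (x (i - 1)) (y i) (y (i - 1))))
      in t * \<tau> (n - 1) / \<xi> * norm \<theta>^2 + 2 * t * Phiy \<le> \<nu> * r + (1 - \<nu>) * c)"

definition pdacl_iterates where
  "pdacl_iterates f g h gradh H H' \<psi> \<xi> \<phi> \<tau>max \<nu> \<mu> \<eta> M \<beta> x y z \<tau> \<delta> w \<longleftrightarrow>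
     1 < \<psi> \<and> \<psi> < 1 + sqrt 3 \<and> 0 < \<xi> \<and> 1 < \<phi> \<and>
     0 < 2 * \<psi> - \<xi> - \<psi>^3 * \<phi> / (1 + \<psi>) \<and>
     0 < \<tau>max \<and> 0 < \<nu> \<and> \<nu> < 1 \<and> 0 < \<mu> \<and> \<mu> < 1 \<and> 0 \<le> \<eta> \<and> \<eta> < 1 \<and>
     1 \<le> M \<and> 0 < \<beta> \<and>
     x 0 \<in> edom g \<and> y 0 \<in> edom (fconj f) \<and> 0 < \<tau> 0 \<and> \<tau> 0 \<le> \<tau>max \<and>
     z 0 = x 0 \<and> \<delta> 0 = 1 \<and>
     (\<forall>n\<ge>1.
        z n = ((\<psi> - 1) / \<psi>) *\<^sub>R x (n - 1) + (1 / \<psi>) *\<^sub>R z (n - 1) \<and>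
        x n = Prox (\<tau> (n - 1)) g (z n - \<tau> (n - 1) *\<^sub>R gradxPhi gradh H' (x (n - 1)) (y (n - 1))) \<and>
        (let \<omega> = 2 * \<psi> - \<xi> - \<psi>^3 * \<phi> / (1 + \<psi>);
             tb = min (\<phi> * \<tau> (n - 1)) \<tau>max;
             C = ls_cond f h gradh H H' \<omega> \<xi> \<nu> \<eta> \<beta> M x y \<tau> \<delta> n
         in (\<exists>i::nat. \<tau> n = tb * \<mu>^i \<and> C (tb * \<mu>^i) \<and> (\<forall>j<i. \<not> C (tb * \<mu>^j)))) \<and>
        y n = ytrial f H \<beta> x y n (\<tau> n) \<and>
        \<delta> n = \<tau> n / \<tau> (n - 1) \<and>
        w n = Prox (1 / (\<beta> * \<tau> n)) f ((1 / (\<beta> * \<tau> n)) *\<^sub>R y (n - 1) + H (x n)))"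

end

(* Every update of PDAc-L is a proximal step, and the optimality condition of a
   proximal step is a subgradient inclusion: with G_k = grad_x Phi(x_k, y_k),
   (z_k - tau_{k-1} G_{k-1} - x_k) / tau_{k-1} is a subgradient of g at x_k.
   Test it for k = n+1 at x^* and for k = n at x_{n+1}, add the tangent inequality
   of the convex function Phi(., y_n) at x_n, and multiply by tau_n: the
   extrapolation identity z_n - x_n = psi (z_{n+1} - x_n) and delta_n = tau_n / tau_{n-1}
   turn the primal terms into the right-hand side.  For the dual part, Moreau's
   decomposition Prox_{lam f^*}(a) = a - lam Prox_{f/lam}(a/lam) with lam = beta tau_n
   gives y_n = y_{n-1} + beta tau_n (H(x_n) - w_n) and y_n in the subdifferential of f
   at w_n; testing this at w^* = H x^* yields the term <y_n - y_{n-1}, y - y_n> / beta. *)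

theory Submission
  imports Defs
begin

lemma closed_convex_properD:
  assumes "closed_convex_proper f"
  shows "f x \<noteq> -\<infinity>" "\<exists>x. f x < \<infinity>" "convex (epigraph f)" "closed (epigraph f)"
  using assms by (auto simp: closed_convex_proper_def proper_fun_def)

lemma proper_fun_real_of_ereal:
  assumes "proper_fun f" "f x < \<infinity>"
  shows "f x = ereal (real_of_ereal (f x))"
  using assms by (cases "f x") (auto simp: proper_fun_def)

lemma subdiff_imp_edom: "v \<in> subdiff f x \<Longrightarrow> x \<in> edom f"
  by (simp add: subdiff_def edom_def)

lemma subdiff_real_le:
  assumes "proper_fun f" "v \<in> subdiff f x" "f u < \<infinity>"
  shows "real_of_ereal (f x) + inner v (u - x) \<le> real_of_ereal (f u)"
proof -
  have "f x < \<infinity>" and le: "f x + ereal (inner v (u - x)) \<le> f u"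
    using assms(2) by (auto simp: subdiff_def)
  with assms show ?thesis
    by (metis proper_fun_real_of_ereal ereal_less_eq(3) plus_ereal.simps(1))
qed

lemma fenchel_young_inequality: "ereal (inner w y) - f w \<le> fconj f y"
  unfolding fconj_def by (rule SUP_upper) simp

lemma fconj_eq_of_subdiff:
  assumes fw: "f w = ereal fw" and sg: "y \<in> subdiff f w"
  shows "fconj f y = ereal (inner w y - fw)"
proof (rule antisym)
  show "fconj f y \<le> ereal (inner w y - fw)"
    unfolding fconj_def
  proof (rule SUP_least)
    fix w'
    have le: "f w + ereal (inner y (w' - w)) \<le> f w'" using sg by (auto simp: subdiff_def)
    show "ereal (inner w' y) - f w' \<le> ereal (inner w y - fw)"
    proof (cases "f w'")
      case (real r)
      hence "fw + inner y (w' - w) \<le> r" using le fw by simp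
      thus ?thesis using real by (simp add: inner_diff_right inner_commute)
    qed (use le fw in auto)
  qed
next
  show "ereal (inner w y - fw) \<le> fconj f y" using fenchel_young_inequality[of w y f] fw by simp
qed

lemma subdiff_imp_edom_fconj:
  assumes "proper_fun f" "y \<in> subdiff f w"
  shows "y \<in> edom (fconj f)"
proof -
  obtain fw where "f w = ereal fw"
    using assms by (cases "f w") (auto simp: subdiff_def proper_fun_def)
  thus ?thesis using fconj_eq_of_subdiff[where f = f, OF _ assms(2)] by (simp add: edom_def)
qed

(* Unlike convex_on_imp_above_tangent in the library, this is not restricted to the
   real line and allows u on the boundary of C. *)
lemma convex_on_above_tangent:
  fixes F :: "'a::real_normed_vector \<Rightarrow> real"
  assumes cv: "convex_on C F" and u: "u \<in> C" and v: "v \<in> C"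
    and der: "(F has_derivative D) (at u)"
  shows "F u + D (v - u) \<le> F v"
proof -
  define d where "d = v - u"
  have line: "((\<lambda>t::real. u + t *\<^sub>R d) has_derivative (\<lambda>t. t *\<^sub>R d)) (at 0)"
    by (auto intro!: derivative_eq_intros)
  have "((\<lambda>t. F (u + t *\<^sub>R d)) has_derivative (\<lambda>t. D (t *\<^sub>R d))) (at 0)"
    using diff_chain_at[OF line] der by (simp add: o_def)
  moreover have "(\<lambda>t. D (t *\<^sub>R d)) = (\<lambda>t. D d * t)"
    using has_derivative_linear[OF der] by (auto simp: linear_scale mult.commute)
  ultimately have "((\<lambda>t. F (u + t *\<^sub>R d)) has_field_derivative D d) (at 0)"
    by (simp add: has_field_derivative_def mult.commute[of _ "D d"])
  hence lim: "((\<lambda>t. (F (u + t *\<^sub>R d) - F u) / t) \<longlongrightarrow> D d) (at_right 0)"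
    unfolding has_field_derivative_iff by (auto intro: tendsto_mono at_le)
  have "eventually (\<lambda>t. (F (u + t *\<^sub>R d) - F u) / t \<le> F v - F u) (at_right (0::real))"
    using eventually_at_right_real[of 0 1]
  proof (rule eventually_mono)
    fix t :: real assume t: "t \<in> {0<..<1}"
    have "u + t *\<^sub>R d = (1 - t) *\<^sub>R u + t *\<^sub>R v" by (simp add: d_def algebra_simps)
    hence "F (u + t *\<^sub>R d) \<le> (1 - t) * F u + t * F v"
      using convex_onD[OF cv, of t u v] t u v by auto
    hence "F (u + t *\<^sub>R d) - F u \<le> t * (F v - F u)" by (simp add: algebra_simps)
    thus "(F (u + t *\<^sub>R d) - F u) / t \<le> F v - F u"
      using t by (simp add: divide_simps mult.commute)
  qed simp
  hence "D d \<le> F v - F u"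
    using tendsto_upperbound[OF lim] by simp
  thus ?thesis by (simp add: d_def)
qed

lemma closed_convex_proper_affine_minorant:
  fixes f :: "'a::euclidean_space \<Rightarrow> ereal"
  assumes ccp: "closed_convex_proper f"
  obtains c d where "\<And>u. ereal (inner c u + d) \<le> f u"
proof -
  obtain x0 where "f x0 < \<infinity>" "f x0 \<noteq> -\<infinity>" using closed_convex_properD[OF ccp] by blast
  then obtain f0 where f0: "f x0 = ereal f0" by (cases "f x0") auto
  have "(x0, f0 - 1) \<notin> epigraph f" using f0 by (simp add: epigraph_def)
  then obtain a b where ab: "inner a (x0, f0 - 1) < b" "\<forall>p\<in>epigraph f. inner a p > b"
    using separating_hyperplane_closed_point[OF closed_convex_properD(3,4)[OF ccp]] by blast
  have "(x0, f0) \<in> epigraph f" using f0 by (simp add: epigraph_def)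
  hence pos: "snd a > 0" using ab
    by (cases a) (auto simp: inner_prod_def algebra_simps)
  have "ereal (inner (- (1 / snd a) *\<^sub>R fst a) u + b / snd a) \<le> f u" for u
  proof (cases "f u")
    case (real r)
    hence "(u, r) \<in> epigraph f" by (simp add: epigraph_def)
    hence "inner (fst a) u + snd a * r > b" using ab by (cases a) (auto simp: inner_prod_def)
    thus ?thesis using real pos by (simp add: field_simps)
  qed (use closed_convex_properD[OF ccp] in auto)
  thus thesis by (rule that)
qed

lemma quadratic_le_affine_bound:
  fixes r lam C K :: real
  assumes "lam > 0" "r \<ge> 0" "C \<ge> 0" "r^2 / (2 * lam) \<le> K + C * r"
  shows "r \<le> 4 * lam * C + 4 * lam * \<bar>K\<bar> + 1"
proof (rule ccontr)
  assume "\<not> ?thesis"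
  hence r: "r > 4 * lam * C + 4 * lam * \<bar>K\<bar> + 1" by simp
  have quad: "r * r \<le> 2 * lam * K + 2 * lam * C * r"
    using assms by (simp add: field_simps power2_eq_square)
  have nonneg: "lam * \<bar>K\<bar> \<ge> 0" "lam * C \<ge> 0" using assms by simp_all
  hence "4 * lam * C \<le> r" "1 \<le> r" using r by linarith+
  hence "4 * lam * C * r \<le> r * r" "r * 1 \<le> r * r"
    using assms by (simp_all add: mult_right_mono mult_left_mono)
  moreover have "lam * K \<le> lam * \<bar>K\<bar>" using assms by (intro mult_left_mono) auto
  ultimately show False using quad r nonneg by linarith
qed

lemma prox_sublevel_bounded:
  fixes f :: "'a::euclidean_space \<Rightarrow> ereal"
  assumes ccp: "closed_convex_proper f" and lam: "lam > 0"
  shows "bounded (epigraph f \<inter> {p. snd p + norm (fst p - a)^2 / (2 * lam) \<le> m})"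
    (is "bounded ?K")
proof -
  obtain c d where cd: "\<And>u. ereal (inner c u + d) \<le> f u"
    using closed_convex_proper_affine_minorant[OF ccp] by blast
  define K0 where "K0 = m - d - inner c a"
  define R where "R = 4 * lam * norm c + 4 * lam * \<bar>K0\<bar> + 1"
  define B where "B = norm c * (norm a + R) + \<bar>d\<bar> + \<bar>m\<bar>"
  have "?K \<subseteq> cball a R \<times> cball 0 B"
  proof (clarsimp)
    fix u t assume ft: "(u, t) \<in> epigraph f" and le: "t + norm (u - a)^2 / (2 * lam) \<le> m"
    have ct: "inner c u + d \<le> t"
      using cd[of u] ft by (simp add: epigraph_def) (metis ereal_less_eq(3) order_trans)
    have "inner c u = inner c (u - a) + inner c a" by (simp add: inner_diff_right)
    moreover have "- (norm c * norm (u - a)) \<le> inner c (u - a)"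
      using Cauchy_Schwarz_ineq2[of c "u - a"] by (simp add: abs_le_iff)
    ultimately have "norm (u - a)^2 / (2 * lam) \<le> K0 + norm c * norm (u - a)"
      using ct le by (simp add: K0_def)
    hence r: "norm (u - a) \<le> R"
      unfolding R_def by (rule quadratic_le_affine_bound[OF lam norm_ge_zero norm_ge_zero])
    hence "norm u \<le> norm a + R" using norm_triangle_sub[of u a] by (simp add: norm_minus_commute)
    hence "\<bar>inner c u\<bar> \<le> norm c * (norm a + R)"
      using Cauchy_Schwarz_ineq2[of c u] by (meson mult_left_mono norm_ge_zero order_trans)
    moreover have "norm (u - a)^2 / (2 * lam) \<ge> 0" using lam by simp
    ultimately have "\<bar>t\<bar> \<le> B" using ct le unfolding B_def by linarith
    thus "dist a u \<le> R \<and> \<bar>t\<bar> \<le> B" using r by (simp add: dist_norm norm_minus_commute)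
  qed
  thus ?thesis by (rule bounded_subset[OF bounded_Times[OF bounded_cball bounded_cball], rotated])
qed

lemma prox_minimizer_exists:
  fixes f :: "'a::euclidean_space \<Rightarrow> ereal"
  assumes ccp: "closed_convex_proper f" and lam: "lam > 0"
  shows "\<exists>u. \<forall>v. f u + ereal (norm (u - a)^2 / (2 * lam)) \<le> f v + ereal (norm (v - a)^2 / (2 * lam))"
proof -
  define q where "q v = norm (v - a)^2 / (2 * lam)" for v
  obtain x0 where "f x0 < \<infinity>" "f x0 \<noteq> -\<infinity>" using closed_convex_properD[OF ccp] by blast
  then obtain f0 where f0: "f x0 = ereal f0" by (cases "f x0") auto
  define K where "K = epigraph f \<inter> {p. snd p + q (fst p) \<le> f0 + q x0}"
  have cont: "continuous_on UNIV (\<lambda>p::'a \<times> real. snd p + q (fst p))"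
    unfolding q_def using lam by (intro continuous_intros) auto
  have "closed K" unfolding K_def
    by (intro closed_Int closed_convex_properD(4)[OF ccp] closed_Collect_le[OF cont continuous_on_const])
  moreover have "bounded K" unfolding K_def q_def by (rule prox_sublevel_bounded[OF ccp lam])
  ultimately have "compact K" by (simp add: compact_eq_bounded_closed)
  have x0K: "(x0, f0) \<in> K" using f0 by (simp add: K_def epigraph_def)
  obtain p where pK: "p \<in> K" and pmin: "\<And>p'. p' \<in> K \<Longrightarrow> snd p + q (fst p) \<le> snd p' + q (fst p')"
    using continuous_attains_inf[OF \<open>compact K\<close> _ continuous_on_subset[OF cont]] x0K by blast
  have fp: "f (fst p) \<le> ereal (snd p)" using pK by (cases p) (simp add: K_def epigraph_def)
  have "f (fst p) + ereal (q (fst p)) \<le> f v + ereal (q v)" for v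
  proof (cases "f v")
    case (real r)
    have "snd p + q (fst p) \<le> r + q v"
    proof (cases "(v, r) \<in> K")
      case False
      with real have "r + q v > f0 + q x0" by (simp add: K_def epigraph_def)
      thus ?thesis using pmin[OF x0K] by simp
    next
      case True thus ?thesis using pmin[OF True] by simp
    qed
    hence "f (fst p) + ereal (q (fst p)) \<le> ereal (r + q v)"
      using fp by (metis add_right_mono ereal_less_eq(3) order_trans plus_ereal.simps(1))
    thus ?thesis using real by simp
  qed (use closed_convex_properD[OF ccp] in auto)
  thus ?thesis unfolding q_def by blast
qed

lemma prox_minimizer_subdiff:
  fixes f :: "'a::real_inner \<Rightarrow> ereal"
  assumes f: "proper_fun f" "convex (epigraph f)" and lam: "lam > 0"
    and min: "\<And>v. f u + ereal (norm (u - a)^2 / (2 * lam)) \<le> f v + ereal (norm (v - a)^2 / (2 * lam))"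
  shows "(1 / lam) *\<^sub>R (a - u) \<in> subdiff f u"
proof -
  define q where "q v = norm (v - a)^2 / (2 * lam)" for v
  define p where "p = (1 / lam) *\<^sub>R (a - u)"
  obtain x0 where "f x0 < \<infinity>" using f(1) by (auto simp: proper_fun_def)
  hence "f x0 + ereal (q x0) < \<infinity>" by simp
  hence "f u + ereal (q u) < \<infinity>" using min[of x0] unfolding q_def by (rule le_less_trans[rotated])
  then obtain fu where fu: "f u = ereal fu" using f(1) by (cases "f u") (auto simp: proper_fun_def)
  have "f u + ereal (inner p (v - u)) \<le> f v" for v
  proof (cases "f v")
    case (real fv)
    define c where "c = norm (v - u)^2 / (2 * lam)"
    have approx: "fu + inner p (v - u) \<le> fv + t * c" if t: "0 < t" "t < 1" for t
    proof -
      define ut where "ut = (1 - t) *\<^sub>R u + t *\<^sub>R v"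
      have "(u, fu) \<in> epigraph f" "(v, fv) \<in> epigraph f" using fu real by (auto simp: epigraph_def)
      hence "(1 - t) *\<^sub>R (u, fu) + t *\<^sub>R (v, fv) \<in> epigraph f"
        using f(2) t by (intro convexD) auto
      hence "f ut \<le> ereal ((1 - t) * fu + t * fv)" by (simp add: epigraph_def ut_def)
      hence "f ut + ereal (q ut) \<le> ereal ((1 - t) * fu + t * fv + q ut)"
        by (metis add_right_mono plus_ereal.simps(1))
      moreover have "ereal (fu + q u) \<le> f ut + ereal (q ut)" using min[of ut] fu by (simp add: q_def)
      ultimately have M: "fu + q u \<le> (1 - t) * fu + t * fv + q ut"
        by (metis ereal_less_eq(3) order_trans)
      have shift: "ut - a = (u - a) + t *\<^sub>R (v - u)" by (simp add: ut_def algebra_simps)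
      have "norm (ut - a)^2 = norm (u - a)^2 + 2 * inner (u - a) (t *\<^sub>R (v - u)) + norm (t *\<^sub>R (v - u))^2"
        unfolding shift using dot_norm[of "u - a" "t *\<^sub>R (v - u)"] by simp
      hence "norm (ut - a)^2 = norm (u - a)^2 + 2 * t * inner (u - a) (v - u) + t^2 * norm (v - u)^2"
        by (simp add: power_mult_distrib)
      hence "q ut = q u - t * inner p (v - u) + t * (t * c)"
        using lam by (simp add: q_def p_def c_def inner_diff_left field_simps power2_eq_square)
      with M have "t * (fu + inner p (v - u)) \<le> t * (fv + t * c)"
        by (simp add: algebra_simps)
      thus ?thesis using t by simp
    qed
    have "((\<lambda>t. fv + t * c) \<longlongrightarrow> fv) (at_right 0)"
      by (auto intro!: tendsto_eq_intros)
    moreover have "eventually (\<lambda>t. fu + inner p (v - u) \<le> fv + t * c) (at_right 0)"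
      using eventually_at_right_real[of 0 1] by (rule eventually_mono) (use approx in auto)
    ultimately have "fu + inner p (v - u) \<le> fv"
      by (intro tendsto_lowerbound) auto
    thus ?thesis using fu real by simp
  qed (use f(1) fu in \<open>auto simp: proper_fun_def\<close>)
  thus ?thesis using fu by (simp add: subdiff_def p_def)
qed

lemma Prox_subdiff:
  fixes f :: "'a::euclidean_space \<Rightarrow> ereal"
  assumes "closed_convex_proper f" "lam > 0"
  shows "(1 / lam) *\<^sub>R (a - Prox lam f a) \<in> subdiff f (Prox lam f a)"
proof (rule prox_minimizer_subdiff)
  show "f (Prox lam f a) + ereal (norm (Prox lam f a - a)^2 / (2 * lam))
          \<le> f v + ereal (norm (v - a)^2 / (2 * lam))" for v
    using someI_ex[OF prox_minimizer_exists[OF assms]] unfolding Prox_def by blast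
qed (use assms in \<open>auto simp: closed_convex_proper_def\<close>)

lemma Prox_eqI:
  fixes F :: "'a::real_normed_vector \<Rightarrow> ereal"
  assumes lam: "lam > 0" and Fp: "F p = ereal c"
    and strong: "\<And>u. F p + ereal (norm (p - a)^2 / (2 * lam) + norm (u - p)^2 / (2 * lam))
                      \<le> F u + ereal (norm (u - a)^2 / (2 * lam))"
  shows "Prox lam F a = p"
  unfolding Prox_def
proof (rule some_equality)
  have "F p + ereal (norm (p - a)^2 / (2 * lam)) \<le> F v + ereal (norm (v - a)^2 / (2 * lam))" for v
  proof -
    have "F p + ereal (norm (p - a)^2 / (2 * lam))
            \<le> F p + ereal (norm (p - a)^2 / (2 * lam) + norm (v - p)^2 / (2 * lam))"
      using Fp lam by simp
    also have "\<dots> \<le> F v + ereal (norm (v - a)^2 / (2 * lam))" by (rule strong)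
    finally show ?thesis .
  qed
  thus "\<forall>v. F p + ereal (norm (p - a)^2 / (2 * lam)) \<le> F v + ereal (norm (v - a)^2 / (2 * lam))"
    by blast
next
  fix u
  assume min: "\<forall>v. F u + ereal (norm (u - a)^2 / (2 * lam)) \<le> F v + ereal (norm (v - a)^2 / (2 * lam))"
  have "ereal (c + (norm (p - a)^2 / (2 * lam) + norm (u - p)^2 / (2 * lam)))
          = F p + ereal (norm (p - a)^2 / (2 * lam) + norm (u - p)^2 / (2 * lam))"
    using Fp by simp
  also have "\<dots> \<le> F u + ereal (norm (u - a)^2 / (2 * lam))" by (rule strong)
  also have "\<dots> \<le> F p + ereal (norm (p - a)^2 / (2 * lam))" using min by blast
  also have "\<dots> = ereal (c + norm (p - a)^2 / (2 * lam))" using Fp by simp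
  finally have "norm (u - p)^2 / (2 * lam) \<le> 0" by simp
  hence "norm (u - p)^2 \<le> 0" using lam by (simp add: divide_le_0_iff)
  thus "u = p" by simp
qed

(* With p = a - lam w, the Fenchel-Young minorant
   <w, .> - f w of the conjugate touches it at p, and completing the square makes p
   the strict minimizer of the prox objective. *)
lemma Prox_fconj:
  fixes f :: "'a::euclidean_space \<Rightarrow> ereal"
  assumes ccp: "closed_convex_proper f" and lam: "lam > 0"
  shows "Prox lam (fconj f) a = a - lam *\<^sub>R Prox (1 / lam) f ((1 / lam) *\<^sub>R a)"
proof -
  define w where "w = Prox (1 / lam) f ((1 / lam) *\<^sub>R a)"
  define p where "p = a - lam *\<^sub>R w"
  have "p \<in> subdiff f w"
    using Prox_subdiff[OF ccp, of "1 / lam" "(1 / lam) *\<^sub>R a"] lam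
    by (simp add: w_def p_def algebra_simps)
  moreover obtain fw where fw: "f w = ereal fw"
    using calculation closed_convex_properD(1)[OF ccp, of w]
    by (cases "f w") (auto simp: subdiff_def)
  ultimately have Fp: "fconj f p = ereal (inner w p - fw)" by (rule fconj_eq_of_subdiff[rotated])
  have "fconj f p + ereal (norm (p - a)^2 / (2 * lam) + norm (u - p)^2 / (2 * lam))
          \<le> fconj f u + ereal (norm (u - a)^2 / (2 * lam))" for u
  proof -
    have "norm (u - a)^2 = norm (u - p)^2 + 2 * inner (u - p) (p - a) + norm (p - a)^2"
      using dot_norm[of "u - p" "p - a"] by simp
    moreover have "p - a = - lam *\<^sub>R w" by (simp add: p_def)
    hence "inner (u - p) (p - a) = - lam * (inner w u - inner w p)"
      by (simp add: inner_diff_left inner_diff_right inner_commute)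
    ultimately have "inner w u + norm (u - a)^2 / (2 * lam)
        = inner w p + norm (p - a)^2 / (2 * lam) + norm (u - p)^2 / (2 * lam)"
      using lam by (simp add: field_simps)
    hence "fconj f p + ereal (norm (p - a)^2 / (2 * lam) + norm (u - p)^2 / (2 * lam))
             = ereal (inner w u - fw) + ereal (norm (u - a)^2 / (2 * lam))"
      using Fp by simp
    also have "\<dots> \<le> fconj f u + ereal (norm (u - a)^2 / (2 * lam))"
      using fenchel_young_inequality[of w u f] fw by (intro add_right_mono) simp
    finally show ?thesis .
  qed
  thus ?thesis using Prox_eqI[where F = "fconj f", OF lam Fp] by (simp add: p_def w_def)
qed

lemma inner_jacT:
  fixes D :: "'a::euclidean_space \<Rightarrow> 'b::real_inner"
  assumes "linear D"
  shows "inner (jacT D y) d = inner (D d) y"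
proof -
  have "D d = D (\<Sum>i\<in>Basis. inner d i *\<^sub>R i)" by (simp add: euclidean_representation)
  also have "\<dots> = (\<Sum>i\<in>Basis. inner d i *\<^sub>R D i)"
    using assms by (simp add: linear_sum linear_scale)
  finally have "inner (D d) y = (\<Sum>i\<in>Basis. inner d i * inner (D i) y)"
    by (simp add: inner_sum_left)
  moreover have "inner (jacT D y) d = (\<Sum>i\<in>Basis. inner y (D i) * inner i d)"
    by (simp add: jacT_def inner_sum_left)
  ultimately show ?thesis by (simp add: inner_commute mult.commute)
qed

lemma Phi_above_tangent:
  fixes H :: "'a::euclidean_space \<Rightarrow> 'b::real_inner"
  assumes h: "convex_on C h" "(h has_derivative (\<lambda>d. inner (gradh u) d)) (at u)"
    and H: "convex_on C (\<lambda>u. inner (H u) y)" "(H has_derivative H' u) (at u)"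
    and "u \<in> C" "u' \<in> C"
  shows "Phi h H u y + inner (gradxPhi gradh H' u y) (u' - u) \<le> Phi h H u' y"
proof -
  have "((\<lambda>u. h u + inner (H u) y) has_derivative (\<lambda>d. inner (gradh u) d + inner (H' u d) y)) (at u)"
    using h(2) H(2) by (auto intro!: derivative_eq_intros)
  from convex_on_above_tangent[OF convex_on_add[OF h(1) H(1)] assms(5,6) this]
  have "h u + inner (H u) y + (inner (gradh u) (u' - u) + inner (H' u (u' - u)) y) \<le> h u' + inner (H u') y" .
  thus ?thesis
    using inner_jacT[OF has_derivative_linear[OF H(2)]]
    by (simp add: Phi_def gradxPhi_def inner_add_left)
qed

lemma pdacl_iterates_params:
  assumes "pdacl_iterates f g h gradh H H' \<psi> \<xi> \<phi> \<tau>max \<nu> \<mu> \<eta> M \<beta> x y z \<tau> \<delta> w"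
  shows "1 < \<psi>" "0 < \<beta>"
  using assms by (simp_all add: pdacl_iterates_def)

lemma pdacl_iterates_step:
  assumes "pdacl_iterates f g h gradh H H' \<psi> \<xi> \<phi> \<tau>max \<nu> \<mu> \<eta> M \<beta> x y z \<tau> \<delta> w" "k \<ge> 1"
  shows "z k = ((\<psi> - 1) / \<psi>) *\<^sub>R x (k - 1) + (1 / \<psi>) *\<^sub>R z (k - 1)"
    and "x k = Prox (\<tau> (k - 1)) g (z k - \<tau> (k - 1) *\<^sub>R gradxPhi gradh H' (x (k - 1)) (y (k - 1)))"
    and "y k = ytrial f H \<beta> x y k (\<tau> k)"
    and "\<delta> k = \<tau> k / \<tau> (k - 1)"
    and "w k = Prox (1 / (\<beta> * \<tau> k)) f ((1 / (\<beta> * \<tau> k)) *\<^sub>R y (k - 1) + H (x k))"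
  using assms unfolding pdacl_iterates_def by blast+

lemma pdacl_tau_pos:
  assumes alg: "pdacl_iterates f g h gradh H H' \<psi> \<xi> \<phi> \<tau>max \<nu> \<mu> \<eta> M \<beta> x y z \<tau> \<delta> w"
  shows "\<tau> k > 0"
proof (induction k)
  case 0 thus ?case using alg by (simp add: pdacl_iterates_def)
next
  case (Suc k)
  have pars: "1 < \<phi>" "0 < \<tau>max" "0 < \<mu>" using alg by (auto simp: pdacl_iterates_def)
  from alg have "\<exists>i::nat. \<tau> (Suc k) = min (\<phi> * \<tau> k) \<tau>max * \<mu>^i"
    unfolding pdacl_iterates_def Let_def by (metis diff_Suc_1 le_add1 plus_1_eq_Suc)
  then obtain i where "\<tau> (Suc k) = min (\<phi> * \<tau> k) \<tau>max * \<mu>^i" by blast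
  thus ?case using pars Suc by simp
qed

lemma pdacl_extrapolation:
  assumes alg: "pdacl_iterates f g h gradh H H' \<psi> \<xi> \<phi> \<tau>max \<nu> \<mu> \<eta> M \<beta> x y z \<tau> \<delta> w"
  shows "z k - x k = \<psi> *\<^sub>R (z (k + 1) - x k)"
proof -
  have "z (k + 1) = ((\<psi> - 1) / \<psi>) *\<^sub>R x k + (1 / \<psi>) *\<^sub>R z k"
    using pdacl_iterates_step(1)[OF alg, of "k + 1"] by simp
  hence "\<psi> *\<^sub>R z (k + 1) = (\<psi> - 1) *\<^sub>R x k + z k"
    using pdacl_iterates_params(1)[OF alg] by (simp add: scaleR_right_distrib)
  thus ?thesis by (simp add: algebra_simps)
qed

lemma pdacl_primal_subdiff:
  assumes g: "closed_convex_proper g"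
    and alg: "pdacl_iterates f g h gradh H H' \<psi> \<xi> \<phi> \<tau>max \<nu> \<mu> \<eta> M \<beta> x y z \<tau> \<delta> w"
    and k: "k \<ge> 1"
  shows "(1 / \<tau> (k - 1)) *\<^sub>R (z k - \<tau> (k - 1) *\<^sub>R gradxPhi gradh H' (x (k - 1)) (y (k - 1)) - x k)
           \<in> subdiff g (x k)"
  using Prox_subdiff[OF g pdacl_tau_pos[OF alg]] pdacl_iterates_step(2)[OF alg k] by metis

lemma pdacl_dual_step:
  assumes f: "closed_convex_proper f"
    and alg: "pdacl_iterates f g h gradh H H' \<psi> \<xi> \<phi> \<tau>max \<nu> \<mu> \<eta> M \<beta> x y z \<tau> \<delta> w"
    and n: "n \<ge> 1"
  shows "y n = y (n - 1) + (\<beta> * \<tau> n) *\<^sub>R (H (x n) - w n)" and "y n \<in> subdiff f (w n)"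
proof -
  define lam where "lam = \<beta> * \<tau> n"
  define a where "a = y (n - 1) + lam *\<^sub>R H (x n)"
  have lam: "lam > 0"
    using pdacl_iterates_params(2)[OF alg] pdacl_tau_pos[OF alg] by (simp add: lam_def)
  have "(1 / lam) *\<^sub>R a = (1 / lam) *\<^sub>R y (n - 1) + H (x n)"
    using lam by (simp add: a_def scaleR_right_distrib)
  hence w: "w n = Prox (1 / lam) f ((1 / lam) *\<^sub>R a)"
    using pdacl_iterates_step(5)[OF alg n] by (simp add: lam_def)
  have yn: "y n = a - lam *\<^sub>R w n"
    using pdacl_iterates_step(3)[OF alg n] Prox_fconj[OF f lam] by (simp add: ytrial_def w a_def lam_def)
  thus "y n = y (n - 1) + (\<beta> * \<tau> n) *\<^sub>R (H (x n) - w n)"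
    by (simp add: a_def lam_def algebra_simps)
  show "y n \<in> subdiff f (w n)"
    unfolding yn using Prox_subdiff[OF f, of "1 / lam" "(1 / lam) *\<^sub>R a"] lam
    by (simp add: w[symmetric] scaleR_diff_right)
qed

lemma pdacl_primal_estimate:
  assumes g: "closed_convex_proper g"
    and alg: "pdacl_iterates f g h gradh H H' \<psi> \<xi> \<phi> \<tau>max \<nu> \<mu> \<eta> M \<beta> x y z \<tau> \<delta> w"
    and n: "n \<ge> 1" and xs: "xs \<in> edom g"
  shows "\<tau> n * (real_of_ereal (g (x n)) - real_of_ereal (g xs))
    \<le> inner (x (n + 1) - z (n + 1)) (xs - x (n + 1))
      + \<psi> * \<delta> n * inner (x n - z (n + 1)) (x (n + 1) - x n)
      + \<tau> n * inner (gradxPhi gradh H' (x n) (y n)) (xs - x (n + 1))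
      + \<tau> n * inner (gradxPhi gradh H' (x (n - 1)) (y (n - 1))) (x (n + 1) - x n)"
proof -
  define G0 where "G0 = gradxPhi gradh H' (x (n - 1)) (y (n - 1))"
  define G1 where "G1 = gradxPhi gradh H' (x n) (y n)"
  define p0 where "p0 = (1 / \<tau> (n - 1)) *\<^sub>R (z n - \<tau> (n - 1) *\<^sub>R G0 - x n)"
  define p1 where "p1 = (1 / \<tau> n) *\<^sub>R (z (n + 1) - \<tau> n *\<^sub>R G1 - x (n + 1))"
  have proper: "proper_fun g" using g by (simp add: closed_convex_proper_def)
  have sub0: "p0 \<in> subdiff g (x n)"
    using pdacl_primal_subdiff[OF g alg n] by (simp add: p0_def G0_def)
  have sub1: "p1 \<in> subdiff g (x (n + 1))"
    using pdacl_primal_subdiff[OF g alg, of "n + 1"] by (simp add: p1_def G1_def)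
  have tau: "\<tau> n > 0" using pdacl_tau_pos[OF alg] .
  have "real_of_ereal (g (x (n + 1))) + inner p1 (xs - x (n + 1)) \<le> real_of_ereal (g xs)"
    using subdiff_real_le[OF proper sub1] xs by (simp add: edom_def)
  hence E1: "\<tau> n * real_of_ereal (g (x (n + 1))) + \<tau> n * inner p1 (xs - x (n + 1)) \<le> \<tau> n * real_of_ereal (g xs)"
    using tau by (metis distrib_left mult_left_mono less_imp_le)
  have "real_of_ereal (g (x n)) + inner p0 (x (n + 1) - x n) \<le> real_of_ereal (g (x (n + 1)))"
    using subdiff_real_le[OF proper sub0] subdiff_imp_edom[OF sub1] by (simp add: edom_def)
  hence E0: "\<tau> n * real_of_ereal (g (x n)) + \<tau> n * inner p0 (x (n + 1) - x n) \<le> \<tau> n * real_of_ereal (g (x (n + 1)))"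
    using tau by (metis distrib_left mult_left_mono less_imp_le)
  have "\<tau> n *\<^sub>R p1 = (z (n + 1) - x (n + 1)) - \<tau> n *\<^sub>R G1"
    using tau by (simp add: p1_def algebra_simps)
  hence "\<tau> n * inner p1 (xs - x (n + 1)) = inner ((z (n + 1) - x (n + 1)) - \<tau> n *\<^sub>R G1) (xs - x (n + 1))"
    by (metis inner_scaleR_left)
  hence T1: "\<tau> n * inner p1 (xs - x (n + 1))
      = - inner (x (n + 1) - z (n + 1)) (xs - x (n + 1)) - \<tau> n * inner G1 (xs - x (n + 1))"
    by (simp add: inner_diff_left)
  have "\<tau> n *\<^sub>R p0 = (\<tau> n / \<tau> (n - 1)) *\<^sub>R (z n - x n) - \<tau> n *\<^sub>R G0"
    using pdacl_tau_pos[OF alg, of "n - 1"] by (simp add: p0_def algebra_simps)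
  also have "\<dots> = (\<psi> * \<delta> n) *\<^sub>R (z (n + 1) - x n) - \<tau> n *\<^sub>R G0"
    by (simp add: pdacl_extrapolation[OF alg] pdacl_iterates_step(4)[OF alg n] mult.commute)
  finally have "\<tau> n * inner p0 (x (n + 1) - x n)
      = inner ((\<psi> * \<delta> n) *\<^sub>R (z (n + 1) - x n) - \<tau> n *\<^sub>R G0) (x (n + 1) - x n)"
    by (metis inner_scaleR_left)
  hence T0: "\<tau> n * inner p0 (x (n + 1) - x n)
      = - (\<psi> * \<delta> n * inner (x n - z (n + 1)) (x (n + 1) - x n)) - \<tau> n * inner G0 (x (n + 1) - x n)"
    by (simp add: inner_diff_left algebra_simps)
  show ?thesis using E0 E1 T0 T1 unfolding G0_def G1_def by (simp add: right_diff_distrib)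
qed

lemma pdacl_dual_estimate:
  assumes f: "closed_convex_proper f"
    and alg: "pdacl_iterates f g h gradh H H' \<psi> \<xi> \<phi> \<tau>max \<nu> \<mu> \<eta> M \<beta> x y z \<tau> \<delta> w"
    and n: "n \<ge> 1" and ws: "ws \<in> edom f"
  shows "\<tau> n * (real_of_ereal (f (w n)) - real_of_ereal (f ws) + inner v (H (x n) - w n))
    \<le> \<tau> n * (inner (H (x n)) (y n) - inner ws (y n)) + (1 / \<beta>) * inner (y n - y (n - 1)) (v - y n)"
proof -
  have tau: "\<tau> n > 0" using pdacl_tau_pos[OF alg] .
  have "real_of_ereal (f (w n)) + inner (y n) (ws - w n) \<le> real_of_ereal (f ws)"
    using subdiff_real_le[OF _ pdacl_dual_step(2)[OF f alg n]] f ws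
    by (simp add: closed_convex_proper_def edom_def)
  hence "\<tau> n * (real_of_ereal (f (w n)) - real_of_ereal (f ws) + inner v (H (x n) - w n))
      \<le> \<tau> n * (inner (y n) (w n - ws) + inner v (H (x n) - w n))"
    using tau by (intro mult_left_mono) (auto simp: inner_diff_right)
  also have "\<dots> = \<tau> n * (inner (H (x n)) (y n) - inner ws (y n)) + \<tau> n * inner (H (x n) - w n) (v - y n)"
    by (simp add: inner_diff_left inner_diff_right inner_commute algebra_simps)
  also have "\<tau> n * inner (H (x n) - w n) (v - y n) = (1 / \<beta>) * inner (y n - y (n - 1)) (v - y n)"
    using pdacl_dual_step(1)[OF f alg n] pdacl_iterates_params(2)[OF alg] by simp
  finally show ?thesis .
qed

theorem lemma4p1:
  fixes f :: "'b::euclidean_space \<Rightarrow> ereal" and g :: "'a::euclidean_space \<Rightarrow> ereal"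
    and h :: "'a \<Rightarrow> real" and gradh :: "'a \<Rightarrow> 'a" and Lh :: real
    and H :: "'a \<Rightarrow> 'b" and H' :: "'a \<Rightarrow> 'a \<Rightarrow> 'b"
    and xs :: 'a and ws :: 'b and ys :: 'b
    and \<psi> \<xi> \<phi> \<tau>max \<nu> \<mu> \<eta> \<beta> :: real and M :: nat
    and x z :: "nat \<Rightarrow> 'a" and y w :: "nat \<Rightarrow> 'b" and \<tau> \<delta> :: "nat \<Rightarrow> real"
  assumes f_ccp: "closed_convex_proper f" and g_ccp: "closed_convex_proper g"
    and h_conv: "convex_on UNIV h"
    and h_grad: "\<And>u. (h has_derivative (\<lambda>d. inner (gradh u) d)) (at u)"
    and Lh_nonneg: "Lh \<ge> 0"
    and h_lip: "\<And>u v. norm (gradh u - gradh v) \<le> Lh * norm (u - v)"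
    and H_diff: "\<And>u. u \<in> edom g \<Longrightarrow> (H has_derivative H' u) (at u)"
    and H_C1: "\<And>d. continuous_on (edom g) (\<lambda>u. H' u d)"
    and H_maps: "H ` edom g \<subseteq> edom f"
    and H_conv: "\<And>v. v \<in> edom (fconj f) \<Longrightarrow> convex_on (edom g) (\<lambda>u. inner (H u) v)"
    and A1: "\<exists>xa ya. xa \<in> edom g \<and> ya \<in> edom (fconj f) \<and>
               - gradxPhi gradh H' xa ya \<in> subdiff g xa \<and>
               gradyPhi H xa ya \<in> subdiff (fconj f) ya"
    and A2: "\<And>X Y. bounded X \<Longrightarrow> bounded Y \<Longrightarrow>
               \<exists>Lyy Lxx Lxy. Lyy \<ge> 0 \<and> Lxx \<ge> 0 \<and> Lxy > 0 \<and>
                 (\<forall>u\<in>X \<inter> edom g. \<forall>u'\<in>X \<inter> edom g. \<forall>v\<in>Y \<inter> edom (fconj f). \<forall>v'\<in>Y \<inter> edom (fconj f).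
                    norm (gradyPhi H u v - gradyPhi H u v') \<le> Lyy * norm (v - v') \<and>
                    norm (gradxPhi gradh H' u v - gradxPhi gradh H' u' v')
                      \<le> Lxx * norm (u - u') + Lxy * norm (v - v'))"
    and fixpt: "xs \<in> edom g" "ws \<in> edom f" "ys \<in> edom (fconj f)"
      "- jacT (H' xs) ys - gradh xs \<in> subdiff g xs" "ys \<in> subdiff f ws" "H xs = ws"
    and alg: "pdacl_iterates f g h gradh H H' \<psi> \<xi> \<phi> \<tau>max \<nu> \<mu> \<eta> M \<beta> x y z \<tau> \<delta> w"
    and n: "n \<ge> 1"
  shows "ereal (\<tau> n) *
           (g (x n) + ereal (h (x n)) + f (w n) + ereal (inner v (H (x n) - w n))
              - (g xs + ereal (h xs) + f ws))
         \<le> ereal (inner (x (n + 1) - z (n + 1)) (xs - x (n + 1))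
              + (1 / \<beta>) * inner (y n - y (n - 1)) (v - y n)
              + \<psi> * \<delta> n * inner (x n - z (n + 1)) (x (n + 1) - x n)
              + \<tau> n * inner (gradxPhi gradh H' (x n) (y n) - gradxPhi gradh H' (x (n - 1)) (y (n - 1)))
                             (x n - x (n + 1)))"
proof -
  define G1 where "G1 = gradxPhi gradh H' (x n) (y n)"
  have proper: "proper_fun g" "proper_fun f"
    using f_ccp g_ccp by (simp_all add: closed_convex_proper_def)
  have xn: "x n \<in> edom g" using pdacl_primal_subdiff[OF g_ccp alg n] by (rule subdiff_imp_edom)
  have wn: "w n \<in> edom f" and yn: "y n \<in> edom (fconj f)"
    using pdacl_dual_step(2)[OF f_ccp alg n] subdiff_imp_edom subdiff_imp_edom_fconj[OF proper(2)] by blast+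
  have "convex_on (edom g) h"
    using convex_on_subset[OF h_conv _ convex_on_imp_convex[OF H_conv[OF yn]]] by simp
  from Phi_above_tangent[where gradh = gradh and H' = H' and u = "x n",
      OF this h_grad[of "x n"] H_conv[OF yn] H_diff[OF xn] xn fixpt(1)]
  have "Phi h H (x n) (y n) + inner G1 (xs - x n) \<le> Phi h H xs (y n)" unfolding G1_def .
  hence "\<tau> n * (h (x n) + inner (H (x n)) (y n) - h xs - inner ws (y n)) \<le> \<tau> n * inner G1 (x n - xs)"
    using pdacl_tau_pos[OF alg, of n] fixpt(6)
    by (intro mult_left_mono) (auto simp: Phi_def inner_diff_right)
  moreover note pdacl_primal_estimate[OF g_ccp alg n fixpt(1)]
    pdacl_dual_estimate[OF f_ccp alg n fixpt(2), of v]
  moreover obtain gx gs fw fs where "g (x n) = ereal gx" "g xs = ereal gs" "f (w n) = ereal fw" "f ws = ereal fs"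
    using proper_fun_real_of_ereal proper xn wn fixpt(1,2) by (metis edom_def mem_Collect_eq)
  ultimately show ?thesis
    by (simp add: G1_def inner_diff_right algebra_simps)
qed

end
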